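(* For $n\ge 0$ let $K_{1,n}$ be the star graph on $n+1$ vertices (one center vertex adjacent to $n$ leaves, no other edges; $K_{1,0}$ is a single vertex). Then $$\sum_{n\ge 0}\mathrm{sa}(K_{1,n};t)\,\frac{x^n}{n!} = e^{tx}\,(t-\tanh x).$$
   Context: All graphs are finite, simple and undirected. For a graph $G=(V,E)$ and $V'\subseteq V$, $G|_{V'}$ denotes the induced subgraph on $V'$. The signed a-number $\mathrm{sa}(G)$ is defined recursively: $\mathrm{sa}(G)=1$ if $G$ is the empty graph (no vertices); $\mathrm{sa}(G)=0$ if $G$ has a connected component with an odd number of vertices; otherwise $\mathrm{sa}(G)=-\sum_{V'\subsetneq V}\mathrm{sa}(G|_{V'})$. The signed a-polynomial of $G$ is $\mathrm{sa}(G;t)=\sum_{V'\subseteq V}\mathrm{sa}(G|_{V'})\,t^{|V\setminus V'|}$. *)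

theory Defs
  imports Complex_Main "HOL-Computational_Algebra.Formal_Power_Series"
begin

text \<open>A finite simple graph is given by a finite vertex set V and a symmetric irreflexive
  edge relation E.  The induced subgraph on W \<subseteq> V is (W, E) (edges restricted to W).\<close>

definition edges_in :: "('a \<Rightarrow> 'a \<Rightarrow> bool) \<Rightarrow> 'a set \<Rightarrow> ('a \<times> 'a) set" where
  "edges_in E V = {(u, v). u \<in> V \<and> v \<in> V \<and> E u v}"

definition component :: "('a \<Rightarrow> 'a \<Rightarrow> bool) \<Rightarrow> 'a set \<Rightarrow> 'a \<Rightarrow> 'a set" where
  "component E V v = {u \<in> V. (v, u) \<in> (edges_in E V)\<^sup>*}"

definition has_odd_component :: "('a \<Rightarrow> 'a \<Rightarrow> bool) \<Rightarrow> 'a set \<Rightarrow> bool" where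
  "has_odd_component E V = (\<exists>v\<in>V. odd (card (component E V v)))"

text \<open>Signed a-number of the graph (V, E); only meaningful for finite V.\<close>
function sa :: "('a \<Rightarrow> 'a \<Rightarrow> bool) \<Rightarrow> 'a set \<Rightarrow> int" where
  "sa E V = (if V = {} then 1
             else if \<not> finite V then 0
             else if has_odd_component E V then 0
             else - (\<Sum>W\<in>{W. W \<subset> V}. sa E W))"
  by pat_completeness auto
termination
  apply (relation "measure (\<lambda>(E, V). card V)")
   apply auto
  by (metis card_seteq not_le)

definition sa_poly :: "('a \<Rightarrow> 'a \<Rightarrow> bool) \<Rightarrow> 'a set \<Rightarrow> real \<Rightarrow> real" where
  "sa_poly E V t = (\<Sum>W\<in>Pow V. of_int (sa E W) * t ^ card (V - W))"

definition star_edge :: "nat \<Rightarrow> nat \<Rightarrow> bool" where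
  "star_edge u v = ((u = 0 \<and> v \<noteq> 0) \<or> (v = 0 \<and> u \<noteq> 0))"

definition star_vertices :: "nat \<Rightarrow> nat set" where
  "star_vertices n = {0..n}"

definition fps_tanh :: "real fps" where
  "fps_tanh = (fps_exp 1 - fps_exp (-1)) / (fps_exp 1 + fps_exp (-1))"

end

theory Submission
  imports Defs
begin

text \<open>Restricted to a vertex set \<open>W\<close>, the star is edgeless when the centre \<open>0\<close> is missing,
  so \<open>sa\<close> vanishes unless \<open>W = {}\<close>. When the centre is present the centre dominates, the graph
  is connected, and its signed a-number depends only on the number \<open>k\<close> of leaves: it is a
  sequence \<open>s k\<close> with \<open>s k = 0\<close> for even \<open>k\<close> and \<open>\<Sum>j\<le>k. (k choose j) * s j = -1\<close> for odd \<open>k\<close>.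
  Splitting the subsets of \<open>{0..n}\<close> by whether they contain the centre gives
  \<open>sa(K_{1,n}; t) = t^(n+1) + (\<Sum>k\<le>n. (n choose k) * s k * t^(n-k))\<close>, so the generating function
  is \<open>t e^(tx) + S(x) e^(tx)\<close> with \<open>S\<close> the exponential generating function of \<open>s\<close>. The two
  parity conditions together say \<open>S(x) (e^x + e^(-x)) = e^(-x) - e^x\<close>, i.e. \<open>S = -tanh\<close>.\<close>

declare sa.simps[simp del]

lemma sum_Pow_by_card:
  fixes f :: "nat \<Rightarrow> 'b::comm_semiring_1"
  assumes "finite A"
  shows "(\<Sum>L\<in>Pow A. f (card L)) = (\<Sum>k\<le>card A. of_nat (card A choose k) * f k)"
proof -
  have "(\<Sum>L\<in>Pow A. f (card L)) = (\<Sum>k\<le>card A. \<Sum>L\<in>{L. L \<in> Pow A \<and> card L = k}. f (card L))"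
    by (rule sum.group[symmetric]) (use assms card_mono in auto)
  also have "\<dots> = (\<Sum>k\<le>card A. of_nat (card A choose k) * f k)"
  proof (rule sum.cong[OF refl])
    fix k
    have "(\<Sum>L\<in>{L. L \<in> Pow A \<and> card L = k}. f (card L)) = (\<Sum>L\<in>{L. L \<subseteq> A \<and> card L = k}. f k)"
      by (rule sum.cong) auto
    then show "(\<Sum>L\<in>{L. L \<in> Pow A \<and> card L = k}. f (card L)) = of_nat (card A choose k) * f k"
      using n_subsets[OF assms, of k] by simp
  qed
  finally show ?thesis .
qed

lemma sum_Pow_insert:
  assumes "finite A" "a \<notin> A"
  shows "(\<Sum>W\<in>Pow (insert a A). f W) = (\<Sum>W\<in>Pow A. f W) + (\<Sum>W\<in>Pow A. f (insert a W))"
proof -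
  have "inj_on (insert a) (Pow A)"
    using assms(2) by (intro inj_onI) (metis PowD Diff_insert_absorb subsetD)
  moreover have "Pow A \<inter> insert a ` Pow A = {}"
    using assms(2) by auto
  ultimately show ?thesis
    using assms(1) by (simp add: Pow_insert sum.union_disjoint sum.reindex)
qed

lemma component_edgeless:
  assumes "\<forall>u\<in>V. \<forall>w\<in>V. \<not> E u w" "v \<in> V"
  shows "component E V v = {v}"
proof -
  have "edges_in E V = {}"
    using assms(1) unfolding edges_in_def by auto
  then show ?thesis
    using assms(2) unfolding component_def by auto
qed

lemma component_dominating_vertex:
  assumes "\<forall>u\<in>V - {c}. E c u \<and> E u c" "c \<in> V" "v \<in> V"
  shows "component E V v = V"
proof -
  have to_c: "(u, c) \<in> (edges_in E V)\<^sup>*" and from_c: "(c, u) \<in> (edges_in E V)\<^sup>*" if "u \<in> V" for u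
    using assms(1,2) that by (cases "u = c"; force simp: edges_in_def)+
  have "(v, u) \<in> (edges_in E V)\<^sup>*" if "u \<in> V" for u
    using rtrancl_trans[OF to_c[OF assms(3)] from_c[OF that]] .
  then show ?thesis
    unfolding component_def by auto
qed

lemma has_odd_component_dominating_vertex:
  assumes "\<forall>u\<in>V - {c}. E c u \<and> E u c" "c \<in> V"
  shows "has_odd_component E V \<longleftrightarrow> odd (card V)"
  using component_dominating_vertex[OF assms] assms(2) unfolding has_odd_component_def by auto

lemma sa_edgeless:
  assumes "finite V" "V \<noteq> {}" "\<forall>u\<in>V. \<forall>w\<in>V. \<not> E u w"
  shows "sa E V = 0"
proof -
  have "has_odd_component E V"
    using assms(2) component_edgeless[OF assms(3)] unfolding has_odd_component_def by auto
  then show ?thesis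
    using assms(1,2) by (subst sa.simps) simp
qed

lemma sum_Pow_sa_eq_0:
  assumes "finite V" "V \<noteq> {}" "\<not> has_odd_component E V"
  shows "(\<Sum>W\<in>Pow V. sa E W) = 0"
proof -
  have "{W. W \<subset> V} = Pow V - {V}"
    by auto
  then have "sa E V = - (\<Sum>W\<in>Pow V - {V}. sa E W)"
    using assms by (subst sa.simps) simp
  then show ?thesis
    using assms(1) by (simp add: sum.remove[of "Pow V" V])
qed

fun star_sa :: "nat \<Rightarrow> int" where
  "star_sa k = (if odd k then -1 - (\<Sum>j<k. int (k choose j) * star_sa j) else 0)"

declare star_sa.simps[simp del]

lemma star_sa_even: "even k \<Longrightarrow> star_sa k = 0"
  by (subst star_sa.simps) simp

lemma star_sa_binomial_sum:
  assumes "odd k"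
  shows "(\<Sum>j\<le>k. int (k choose j) * star_sa j) = -1"
proof -
  have "(\<Sum>j\<le>k. int (k choose j) * star_sa j) = star_sa k + (\<Sum>j<k. int (k choose j) * star_sa j)"
    by (simp add: lessThan_Suc_atMost[symmetric])
  also have "\<dots> = -1"
    using assms by (subst (1) star_sa.simps) simp
  finally show ?thesis .
qed

lemma star_sa_alternating_sum:
  "(\<Sum>j\<le>k. int (k choose j) * (1 + (-1)^(k - j)) * star_sa j) = (-1)^k - 1"
proof (cases "odd k")
  case True
  have "int (k choose j) * (1 + (-1)^(k - j)) * star_sa j = 2 * (int (k choose j) * star_sa j)"
    if "j \<le> k" for j
    using that True by (cases "even j") (auto simp: star_sa_even)
  then have "(\<Sum>j\<le>k. int (k choose j) * (1 + (-1)^(k - j)) * star_sa j)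
      = 2 * (\<Sum>j\<le>k. int (k choose j) * star_sa j)"
    unfolding sum_distrib_left by (intro sum.cong) auto
  then show ?thesis
    using True star_sa_binomial_sum by simp
next
  case False
  \<comment> \<open>For even \<open>k\<close>, every odd \<open>j\<close> has \<open>k - j\<close> odd, so each term vanishes.\<close>
  have "int (k choose j) * (1 + (-1)^(k - j)) * star_sa j = 0" if "j \<le> k" for j
    using that False by (cases "even j") (auto simp: star_sa_even)
  then show ?thesis
    using False by (simp add: sum.neutral)
qed

lemma sa_star_without_centre:
  assumes "finite W" "0 \<notin> W" "W \<noteq> {}"
  shows "sa star_edge W = 0"
  using assms unfolding star_edge_def by (intro sa_edgeless) blast+

lemma sum_Pow_sa_star_without_centre:
  assumes "finite A" "0 \<notin> A"
  shows "(\<Sum>L\<in>Pow A. of_int (sa star_edge L) * f L) = f {}"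
proof -
  have "sa star_edge L = 0" if "L \<in> Pow A - {{}}" for L
    using that assms by (auto intro!: sa_star_without_centre dest: finite_subset)
  then have "(\<Sum>L\<in>Pow A. of_int (sa star_edge L) * f L) = (\<Sum>L\<in>{{}}. of_int (sa star_edge L) * f L)"
    using assms(1) by (intro sum.mono_neutral_right) auto
  then show ?thesis
    by (simp add: sa.simps)
qed

lemma sa_star_with_centre:
  assumes "finite A" "0 \<notin> A"
  shows "sa star_edge (insert 0 A) = star_sa (card A)"
  using assms
proof (induction "card A" arbitrary: A rule: less_induct)
  case less
  have dominating: "\<forall>u\<in>insert 0 A - {0}. star_edge 0 u \<and> star_edge u 0"
    by (simp add: star_edge_def)
  have card_W: "card (insert 0 A) = Suc (card A)"
    using less.prems by simp
  show ?case
  proof (cases "odd (card A)")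
    case False
    then show ?thesis
      using has_odd_component_dominating_vertex[OF dominating] card_W
      by (subst sa.simps) (simp add: star_sa_even)
  next
    case True
    \<comment> \<open>By induction all terms with \<open>L \<noteq> A\<close> agree, and both full sums equal \<open>-1\<close>.\<close>
    define g where "g L = sa star_edge (insert 0 L) - star_sa (card L)" for L
    have "g L = 0" if "L \<in> Pow A - {A}" for L
    proof -
      have "L \<subset> A"
        using that by auto
      then have "card L < card A" "finite L" "0 \<notin> L"
        using less.prems by (auto simp: psubset_card_mono dest: finite_subset)
      then show ?thesis
        by (simp add: g_def less.hyps)
    qed
    then have "(\<Sum>L\<in>Pow A. g L) = g A"
      using less.prems by (simp add: sum.remove[of "Pow A" A])
    moreover have "(\<Sum>L\<in>Pow (insert 0 A). sa star_edge L) = 0"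
      using True card_W less.prems
      by (intro sum_Pow_sa_eq_0) (simp_all add: has_odd_component_dominating_vertex[OF dominating])
    then have "(\<Sum>L\<in>Pow A. sa star_edge (insert 0 L)) = -1"
      using sum_Pow_sa_star_without_centre[OF less.prems, of "\<lambda>_. 1 :: int"]
      by (simp add: sum_Pow_insert[OF less.prems])
    moreover have "(\<Sum>L\<in>Pow A. star_sa (card L)) = -1"
      using sum_Pow_by_card[OF less.prems(1), of star_sa] star_sa_binomial_sum[OF True] by simp
    ultimately show ?thesis
      by (simp add: g_def sum_subtractf)
  qed
qed

lemma sa_poly_star:
  "sa_poly star_edge (star_vertices n) t =
     t^(n + 1) + (\<Sum>k\<le>n. of_nat (n choose k) * (of_int (star_sa k) * t^(n - k)))"
proof -
  define A where "A = {1..n}"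
  have V: "star_vertices n = insert 0 A" and A: "finite A" "0 \<notin> A" "card A = n"
    by (auto simp: star_vertices_def A_def)
  have "(\<Sum>L\<in>Pow A. of_int (sa star_edge (insert 0 L)) * t ^ card (insert 0 A - insert 0 L))
      = (\<Sum>L\<in>Pow A. of_int (star_sa (card L)) * t^(n - card L))"
  proof (rule sum.cong[OF refl])
    fix L assume "L \<in> Pow A"
    then have "L \<subseteq> A" "finite L" "0 \<notin> L"
      using A by (auto dest: finite_subset)
    moreover have "insert 0 A - insert 0 L = A - L"
      using A(2) by auto
    ultimately show "of_int (sa star_edge (insert 0 L)) * t ^ card (insert 0 A - insert 0 L)
        = of_int (star_sa (card L)) * t^(n - card L)"
      using A by (simp add: sa_star_with_centre card_Diff_subset)
  qed
  then show ?thesis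
    unfolding sa_poly_def V sum_Pow_insert[OF A(1,2)] sum_Pow_sa_star_without_centre[OF A(1,2)]
    using sum_Pow_by_card[OF A(1), of "\<lambda>k. of_int (star_sa k) * t^(n - k)"] A by simp
qed

lemma egf_mult:
  fixes a b :: "nat \<Rightarrow> 'a::field_char_0"
  shows "Abs_fps (\<lambda>k. a k / fact k) * Abs_fps (\<lambda>k. b k / fact k)
       = Abs_fps (\<lambda>n. (\<Sum>k\<le>n. of_nat (n choose k) * a k * b (n - k)) / fact n)"
proof (rule fps_ext)
  fix n
  have "a k / fact k * (b (n - k) / fact (n - k)) = of_nat (n choose k) * a k * b (n - k) / fact n"
    if "k \<le> n" for k
    using that by (simp add: binomial_fact field_simps)
  then show "fps_nth (Abs_fps (\<lambda>k. a k / fact k) * Abs_fps (\<lambda>k. b k / fact k)) n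
      = fps_nth (Abs_fps (\<lambda>n. (\<Sum>k\<le>n. of_nat (n choose k) * a k * b (n - k)) / fact n)) n"
    by (simp add: fps_mult_nth atLeast0AtMost sum_divide_distrib)
qed

lemma fps_exp_eq_egf: "fps_exp c = Abs_fps (\<lambda>k. c^k / fact k)"
  by (simp add: fps_exp_def)

definition star_sa_egf :: "real fps" where
  "star_sa_egf = Abs_fps (\<lambda>k. of_int (star_sa k) / fact k)"

lemma star_sa_egf_mult_exp_sum:
  "star_sa_egf * (fps_exp 1 + fps_exp (-1)) = fps_exp (-1) - fps_exp 1"
proof -
  have cosh: "fps_exp 1 + fps_exp (-1) = Abs_fps (\<lambda>k. (1 + (-1)^k) / fact k :: real)"
    by (simp add: fps_eq_iff add_divide_distrib)
  have "(\<Sum>j\<le>k. of_nat (k choose j) * of_int (star_sa j) * (1 + (-1)^(k - j)))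
      = ((-1)^k - 1 :: real)" for k
    using arg_cong[OF star_sa_alternating_sum[of k], of real_of_int] by (simp add: mult_ac)
  then show ?thesis
    unfolding star_sa_egf_def cosh egf_mult by (simp add: fps_eq_iff diff_divide_distrib)
qed

lemma fps_tanh_eq: "fps_tanh = - star_sa_egf"
proof -
  let ?D = "fps_exp (1::real) + fps_exp (-1)"
  have D: "fps_nth ?D 0 \<noteq> 0"
    by simp
  have "fps_tanh = (fps_exp 1 - fps_exp (-1)) * inverse ?D"
    unfolding fps_tanh_def by (rule fps_divide_unit[OF D])
  also have "fps_exp 1 - fps_exp (-1) = - star_sa_egf * ?D"
    using star_sa_egf_mult_exp_sum by simp
  finally show ?thesis
    by (simp add: mult.assoc inverse_mult_eq_1'[OF D])
qed

theorem mainTheorem4: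
  fixes t :: real
  shows "Abs_fps (\<lambda>n. sa_poly star_edge (star_vertices n) t / fact n)
           = fps_exp t * (fps_const t - fps_tanh)"
proof -
  have "Abs_fps (\<lambda>n. sa_poly star_edge (star_vertices n) t / fact n)
      = fps_const t * fps_exp t + star_sa_egf * fps_exp t"
    unfolding star_sa_egf_def fps_exp_eq_egf egf_mult
    by (simp add: fps_eq_iff sa_poly_star add_divide_distrib mult_ac)
  then show ?thesis
    by (simp add: fps_tanh_eq algebra_simps)
qed

end
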